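(* Let $\kappa=\kappa(|x|^2)$ and $\rho=\rho(|x|^2)$ be arbitrary smooth functions on a domain in $\mathbb{R}^n$ with $1-\kappa|x|^2>0$, and let $C$ be a non-zero constant. Then the Riemannian metric $$\bar\alpha=e^\rho\sqrt{|y|^2-\kappa\langle x,y\rangle^2}$$ has the closed and conformal $1$-form $$\bar\beta=C\sqrt{1-\kappa|x|^2}\,e^{2\rho}\langle x,y\rangle,$$ and $\bar b^2:=\|\bar\beta\|_{\bar\alpha}^2=C^2e^{2\rho}|x|^2$.
   Context: $|\cdot|$ and $\langle\cdot,\cdot\rangle$ denote the Euclidean norm and inner product on $\mathbb{R}^n$, and $(x,y)$ are standard coordinates on $T\mathbb{R}^n$. A $1$-form $\bar\beta=\bar b_iy^i$ is closed and conformal with respect to $\bar\alpha=\sqrt{\bar a_{ij}y^iy^j}$ if $\bar b_{i|j}=c(x)\bar a_{ij}$ for some function $c$, covariant derivative taken with respect to the Levi-Civita connection of $\bar\alpha$. *)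

theory Defs
  imports "HOL-Analysis.Analysis"
begin

definition smooth_on :: "real set \<Rightarrow> (real \<Rightarrow> real) \<Rightarrow> bool" where
  "smooth_on T f \<longleftrightarrow> (\<forall>k. \<forall>t\<in>T. ((deriv ^^ k) f) field_differentiable (at t))"

definition partial :: "(real^'n \<Rightarrow> real) \<Rightarrow> 'n \<Rightarrow> real^'n \<Rightarrow> real" where
  "partial f j x = deriv (\<lambda>t. f (x + t *\<^sub>R axis j 1)) 0"

definition metric_matrix :: "(real^'n \<Rightarrow> 'n \<Rightarrow> 'n \<Rightarrow> real) \<Rightarrow> real^'n \<Rightarrow> real^'n^'n" where
  "metric_matrix a x = (\<chi> i j. a x i j)"

definition inv_metric :: "(real^'n \<Rightarrow> 'n \<Rightarrow> 'n \<Rightarrow> real) \<Rightarrow> real^'n \<Rightarrow> 'n \<Rightarrow> 'n \<Rightarrow> real" where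
  "inv_metric a x i j = matrix_inv (metric_matrix a x) $ i $ j"

definition christoffel :: "(real^'n \<Rightarrow> 'n \<Rightarrow> 'n \<Rightarrow> real) \<Rightarrow> 'n \<Rightarrow> 'n \<Rightarrow> 'n \<Rightarrow> real^'n \<Rightarrow> real" where
  "christoffel a k i j x = (1/2) * (\<Sum>l\<in>UNIV. inv_metric a x k l *
      (partial (\<lambda>z. a z j l) i x + partial (\<lambda>z. a z i l) j x - partial (\<lambda>z. a z i j) l x))"

text \<open>Covariant derivative b_{i|j} of a 1-form b = b_i y^i w.r.t. Levi-Civita connection of a.\<close>
definition cov_deriv :: "(real^'n \<Rightarrow> 'n \<Rightarrow> 'n \<Rightarrow> real) \<Rightarrow> (real^'n \<Rightarrow> 'n \<Rightarrow> real) \<Rightarrow> 'n \<Rightarrow> 'n \<Rightarrow> real^'n \<Rightarrow> real" where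
  "cov_deriv a b i j x = partial (\<lambda>z. b z i) j x - (\<Sum>k\<in>UNIV. b x k * christoffel a k i j x)"

definition closed_conformal :: "(real^'n) set \<Rightarrow> (real^'n \<Rightarrow> 'n \<Rightarrow> 'n \<Rightarrow> real) \<Rightarrow> (real^'n \<Rightarrow> 'n \<Rightarrow> real) \<Rightarrow> bool" where
  "closed_conformal U a b \<longleftrightarrow> (\<exists>c :: real^'n \<Rightarrow> real. \<forall>x\<in>U. \<forall>i j. cov_deriv a b i j x = c x * a x i j)"

definition riemannian_metric_on :: "(real^'n) set \<Rightarrow> (real^'n \<Rightarrow> 'n \<Rightarrow> 'n \<Rightarrow> real) \<Rightarrow> bool" where
  "riemannian_metric_on U a \<longleftrightarrow> (\<forall>x\<in>U. (\<forall>i j. a x i j = a x j i) \<and>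
      (\<forall>v::real^'n. v \<noteq> 0 \<longrightarrow> (\<Sum>i\<in>UNIV. \<Sum>j\<in>UNIV. a x i j * v$i * v$j) > 0))"

definition form_norm_sq :: "(real^'n \<Rightarrow> 'n \<Rightarrow> 'n \<Rightarrow> real) \<Rightarrow> (real^'n \<Rightarrow> 'n \<Rightarrow> real) \<Rightarrow> real^'n \<Rightarrow> real" where
  "form_norm_sq a b x = (\<Sum>i\<in>UNIV. \<Sum>j\<in>UNIV. inv_metric a x i j * b x i * b x j)"

end

theory Submission
  imports Defs
begin

text \<open>Both tensors are radial: a_ij = g(|x|^2) delta_ij - h(|x|^2) x_i x_j and
  b_i = f(|x|^2) x_i. For radial data the inverse metric is given by the Sherman-Morrison formula,
  and a direct computation gives b_{i|j} = P x_i x_j + Q delta_ij with P, Q explicit in f, g, h and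
  their derivatives at |x|^2. So b is closed and conformal as soon as P = -c h and Q = c g; for
  g = e^{2 rho}, h = e^{2 rho} kappa and f = C sqrt(1 - kappa |x|^2) e^{2 rho} this holds with
  c = C (1 + 2 rho' |x|^2) / sqrt(1 - kappa |x|^2). Similarly the norm of b is
  f^2 |x|^2 / (g - h |x|^2) = C^2 e^{2 rho} |x|^2.\<close>

definition kronecker :: "'n::finite \<Rightarrow> 'n \<Rightarrow> real" where
  "kronecker i j = (if i = j then 1 else 0)"

definition radial_metric :: "(real \<Rightarrow> real) \<Rightarrow> (real \<Rightarrow> real) \<Rightarrow> real^'n \<Rightarrow> 'n \<Rightarrow> 'n \<Rightarrow> real" where
  "radial_metric g h x i j = g ((norm x)^2) * kronecker i j - h ((norm x)^2) * x$i * x$j"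

definition radial_form :: "(real \<Rightarrow> real) \<Rightarrow> real^'n \<Rightarrow> 'n \<Rightarrow> real" where
  "radial_form f x i = f ((norm x)^2) * x$i"

lemma sum_kronecker [simp]: "(\<Sum>k\<in>UNIV. kronecker i k * c k) = c i"
  by (simp add: kronecker_def mult_if_delta)

lemma sum_component_sq: "(\<Sum>k\<in>UNIV. (x::real^'n) $ k * x $ k) = (norm x)^2"
  by (simp add: power2_norm_eq_inner inner_vec_def)

lemma sum_kronecker_quadratic:
  fixes x :: "real^'n"
  shows "(\<Sum>k\<in>UNIV. kronecker i k * c k + \<beta> * (kronecker j k * x$k) + \<gamma> * (x$k * x$k))
       = c i + \<beta> * x$j + \<gamma> * (norm x)^2"
  by (simp add: sum.distrib sum_distrib_left[symmetric] sum_component_sq)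

lemma matrix_inv_eqI:
  fixes A B :: "real^'n^'n"
  assumes "A ** B = mat 1"
  shows "matrix_inv A = B"
proof -
  have "B ** A = mat 1" using assms matrix_left_right_inverse by blast
  with assms have "\<exists>A'. A ** A' = mat 1 \<and> A' ** A = mat 1" by blast
  then have inv: "A ** matrix_inv A = mat 1 \<and> matrix_inv A ** A = mat 1"
    unfolding matrix_inv_def by (rule someI_ex)
  have "matrix_inv A = matrix_inv A ** (A ** B)" by (simp add: assms)
  also have "\<dots> = (matrix_inv A ** A) ** B" by (simp add: matrix_mul_assoc)
  also have "\<dots> = B" using inv by simp
  finally show ?thesis .
qed

lemma smooth_on_has_real_derivative:
  assumes "smooth_on T f" and "t \<in> T"
  shows "(f has_real_derivative deriv f t) (at t)"
proof -
  have "((deriv ^^ 0) f) field_differentiable (at t)" using assms unfolding smooth_on_def by blast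
  then show ?thesis by (simp add: DERIV_deriv_iff_field_differentiable)
qed

lemma partial_eqI:
  assumes "((\<lambda>t. f (x + t *\<^sub>R axis j 1)) has_real_derivative D) (at 0)"
  shows "partial f j x = D"
  using assms unfolding partial_def by (rule DERIV_imp_deriv)

lemma norm_sq_add_axis:
  fixes x :: "real^'n"
  shows "(norm (x + t *\<^sub>R axis j 1))^2 = (norm x)^2 + 2 * t * x$j + t^2"
  unfolding power2_norm_eq_inner
  by (simp add: inner_add_left inner_add_right inner_axis inner_axis' inner_commute power2_eq_square algebra_simps)

lemma has_real_derivative_radial_line:
  fixes x :: "real^'n"
  assumes "(g has_real_derivative g') (at ((norm x)^2))"
  shows "((\<lambda>t. g ((norm (x + t *\<^sub>R axis j 1))^2)) has_real_derivative 2 * g' * x$j) (at 0)"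
proof -
  have line: "((\<lambda>t::real. (norm x)^2 + 2 * t * x$j + t^2) has_real_derivative 2 * x$j) (at 0)"
    by (auto intro!: derivative_eq_intros)
  have "(g has_real_derivative g') (at ((norm x)^2 + 2 * 0 * x$j + 0^2))"
    using assms by simp
  from DERIV_chain2[OF this line] show ?thesis
    by (simp add: norm_sq_add_axis mult_ac)
qed

lemma has_real_derivative_component_line:
  fixes x :: "real^'n"
  shows "((\<lambda>t. (x + t *\<^sub>R axis j 1) $ i) has_real_derivative kronecker i j) (at 0)"
proof -
  have "(\<lambda>t. (x + t *\<^sub>R axis j 1) $ i) = (\<lambda>t. x$i + t * kronecker i j)"
    by (auto simp: axis_def kronecker_def)
  then show ?thesis by (auto intro!: derivative_eq_intros)
qed

lemma partial_radial_form:
  fixes x :: "real^'n"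
  assumes "(f has_real_derivative f') (at ((norm x)^2))"
  shows "partial (\<lambda>z. radial_form f z i) j x = 2 * f' * x$j * x$i + f ((norm x)^2) * kronecker i j"
proof (rule partial_eqI)
  have "((\<lambda>t. f ((norm (x + t *\<^sub>R axis j 1))^2) * (x + t *\<^sub>R axis j 1) $ i) has_real_derivative
      2 * f' * x$j * (x + 0 *\<^sub>R axis j 1) $ i + kronecker i j * f ((norm (x + 0 *\<^sub>R axis j 1))^2)) (at 0)"
    by (rule DERIV_mult[OF has_real_derivative_radial_line[OF assms] has_real_derivative_component_line])
  then show "((\<lambda>t. radial_form f (x + t *\<^sub>R axis j 1) i) has_real_derivative
      2 * f' * x$j * x$i + f ((norm x)^2) * kronecker i j) (at 0)"
    by (simp add: radial_form_def mult.commute)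
qed

lemma partial_radial_metric:
  fixes x :: "real^'n"
  assumes "(g has_real_derivative g') (at ((norm x)^2))"
    and "(h has_real_derivative h') (at ((norm x)^2))"
  shows "partial (\<lambda>z. radial_metric g h z i j) l x
       = 2 * g' * x$l * kronecker i j - 2 * h' * x$l * x$i * x$j
         - h ((norm x)^2) * (kronecker i l * x$j + x$i * kronecker j l)"
proof (rule partial_eqI)
  let ?z = "\<lambda>t. x + t *\<^sub>R axis l 1"
  have "((\<lambda>t. g ((norm (?z t))^2) * kronecker i j - h ((norm (?z t))^2) * ?z t $ i * ?z t $ j)
      has_real_derivative 2 * g' * x$l * kronecker i j
        - ((2 * h' * x$l * ?z 0 $ i + kronecker i l * h ((norm (?z 0))^2)) * ?z 0 $ j
           + kronecker j l * (h ((norm (?z 0))^2) * ?z 0 $ i))) (at 0)"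
    by (intro DERIV_diff DERIV_cmult_right DERIV_mult has_real_derivative_radial_line
        has_real_derivative_component_line assms)
  then show "((\<lambda>t. radial_metric g h (?z t) i j) has_real_derivative
      2 * g' * x$l * kronecker i j - 2 * h' * x$l * x$i * x$j
         - h ((norm x)^2) * (kronecker i l * x$j + x$i * kronecker j l)) (at 0)"
    by (simp add: radial_metric_def algebra_simps)
qed

lemma inv_metric_radial:
  fixes x :: "real^'n"
  defines "s \<equiv> (norm x)^2"
  assumes "g s \<noteq> 0" and "g s - h s * s \<noteq> 0"
  shows "inv_metric (radial_metric g h) x i j = (kronecker i j + h s / (g s - h s * s) * x$i * x$j) / g s"
proof -
  define p where "p = h s / (g s - h s * s)"
  have entry: "(\<Sum>k\<in>UNIV. radial_metric g h x i k * ((kronecker k j + p * x$k * x$j) / g s))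
      = kronecker i j" for i j
  proof -
    have "(\<Sum>k\<in>UNIV. radial_metric g h x i k * ((kronecker k j + p * x$k * x$j) / g s))
        = (\<Sum>k\<in>UNIV. kronecker i k * (kronecker k j + p * x$k * x$j)
            + (- h s / g s * x$i) * (kronecker j k * x$k) + (- h s * p / g s * x$i * x$j) * (x$k * x$k))"
      using assms(2) by (intro sum.cong) (auto simp: radial_metric_def s_def kronecker_def field_simps)
    also have "\<dots> = kronecker i j + x$i * x$j * (p * (g s - h s * s) - h s) / g s"
      unfolding sum_kronecker_quadratic using assms(2) by (simp add: s_def field_simps)
    also have "\<dots> = kronecker i j"
      using assms(3) by (simp add: p_def)
    finally show ?thesis .
  qed
  have "metric_matrix (radial_metric g h) x ** (\<chi> i j. (kronecker i j + p * x$i * x$j) / g s) = mat 1"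
    using entry by (simp add: vec_eq_iff matrix_matrix_mult_def metric_matrix_def mat_def kronecker_def)
  then show ?thesis
    unfolding inv_metric_def p_def by (simp add: matrix_inv_eqI)
qed

lemma radial_form_raise_index:
  fixes x :: "real^'n"
  defines "s \<equiv> (norm x)^2"
  assumes "g s \<noteq> 0" and "g s - h s * s \<noteq> 0"
  shows "(\<Sum>k\<in>UNIV. radial_form f x k * inv_metric (radial_metric g h) x k l)
       = f s / (g s - h s * s) * x$l"
proof -
  have "(\<Sum>k\<in>UNIV. radial_form f x k * inv_metric (radial_metric g h) x k l)
      = (\<Sum>k\<in>UNIV. kronecker l k * (f s / g s * x$k) + 0 * (kronecker l k * x$k)
          + (f s * h s / ((g s - h s * s) * g s) * x$l) * (x$k * x$k))"
    using assms(2,3)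
    by (intro sum.cong) (auto simp: inv_metric_radial radial_form_def s_def kronecker_def field_simps)
  also have "\<dots> = f s / (g s - h s * s) * x$l"
    unfolding sum_kronecker_quadratic using assms(2,3) by (simp add: s_def field_simps)
  finally show ?thesis .
qed

lemma form_norm_sq_radial:
  fixes x :: "real^'n"
  defines "s \<equiv> (norm x)^2"
  assumes "g s \<noteq> 0" and "g s - h s * s \<noteq> 0"
  shows "form_norm_sq (radial_metric g h) (radial_form f) x = (f s)^2 * s / (g s - h s * s)"
proof -
  have "form_norm_sq (radial_metric g h) (radial_form f) x
      = (\<Sum>j\<in>UNIV. (\<Sum>i\<in>UNIV. radial_form f x i * inv_metric (radial_metric g h) x i j) * radial_form f x j)"
    unfolding form_norm_sq_def by (subst sum.swap) (simp add: sum_distrib_left sum_distrib_right mult_ac)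
  also have "\<dots> = (\<Sum>j\<in>UNIV. (f s / (g s - h s * s) * x$j) * radial_form f x j)"
    using radial_form_raise_index[of g x h f] assms unfolding s_def by presburger
  also have "\<dots> = (\<Sum>j\<in>UNIV. (f s)^2 / (g s - h s * s) * (x$j * x$j))"
    by (simp add: radial_form_def s_def power2_eq_square mult_ac)
  also have "\<dots> = (f s)^2 * s / (g s - h s * s)"
    unfolding sum_distrib_left[symmetric] sum_component_sq s_def by simp
  finally show ?thesis .
qed

lemma radial_form_christoffel:
  fixes x :: "real^'n"
  defines "s \<equiv> (norm x)^2"
  assumes "(g has_real_derivative g') (at s)" and "(h has_real_derivative h') (at s)"
    and "g s \<noteq> 0" and "g s - h s * s \<noteq> 0"
  shows "(\<Sum>k\<in>UNIV. radial_form f x k * christoffel (radial_metric g h) k i j x)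
       = f s / (g s - h s * s) * ((2 * g' - h' * s) * x$i * x$j - (g' + h s) * s * kronecker i j)"
proof -
  define c where "c = f s / (g s - h s * s)"
  define S where "S l = partial (\<lambda>z. radial_metric g h z j l) i x + partial (\<lambda>z. radial_metric g h z i l) j x
      - partial (\<lambda>z. radial_metric g h z i j) l x" for l
  have raise: "(\<Sum>k\<in>UNIV. radial_form f x k * inv_metric (radial_metric g h) x k l) = c * x$l" for l
    using radial_form_raise_index[of g x h f] assms(4,5) unfolding s_def c_def by presburger
  have "(\<Sum>k\<in>UNIV. radial_form f x k * christoffel (radial_metric g h) k i j x)
      = (1/2) * (\<Sum>l\<in>UNIV. (\<Sum>k\<in>UNIV. radial_form f x k * inv_metric (radial_metric g h) x k l) * S l)"
    unfolding christoffel_def S_def sum_distrib_left sum_distrib_right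
    by (subst sum.swap) (simp add: mult_ac)
  also have "\<dots> = (1/2) * (\<Sum>l\<in>UNIV. kronecker j l * (2 * c * g' * x$i * x$l)
      + (2 * c * g' * x$j) * (kronecker i l * x$l)
      + (- 2 * c * (h' * x$i * x$j + (g' + h s) * kronecker i j)) * (x$l * x$l))"
    unfolding raise S_def partial_radial_metric[OF assms(2,3)[unfolded s_def]]
    by (intro arg_cong[where f = "(*) (1/2)"] sum.cong)
      (auto simp: kronecker_def s_def algebra_simps)
  also have "\<dots> = c * ((2 * g' - h' * s) * x$i * x$j - (g' + h s) * s * kronecker i j)"
    unfolding sum_kronecker_quadratic by (simp add: s_def algebra_simps)
  finally show ?thesis unfolding c_def .
qed

lemma cov_deriv_radial:
  fixes x :: "real^'n"
  defines "s \<equiv> (norm x)^2"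
  assumes "(f has_real_derivative f') (at s)"
    and "(g has_real_derivative g') (at s)" and "(h has_real_derivative h') (at s)"
    and "g s \<noteq> 0" and "g s - h s * s \<noteq> 0"
  shows "cov_deriv (radial_metric g h) (radial_form f) i j x
       = (2 * f' - f s / (g s - h s * s) * (2 * g' - h' * s)) * x$i * x$j
         + (f s + f s / (g s - h s * s) * (g' + h s) * s) * kronecker i j"
proof -
  define c where "c = f s / (g s - h s * s)"
  have "cov_deriv (radial_metric g h) (radial_form f) i j x
      = 2 * f' * x$j * x$i + f s * kronecker i j
        - c * ((2 * g' - h' * s) * x$i * x$j - (g' + h s) * s * kronecker i j)"
    using partial_radial_form[OF assms(2)[unfolded s_def]] radial_form_christoffel[OF assms(3-6)[unfolded s_def]]
    unfolding cov_deriv_def c_def s_def by simp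
  then show ?thesis
    unfolding c_def[symmetric] by (simp add: algebra_simps)
qed

lemma radial_metric_quadratic_form:
  fixes x v :: "real^'n"
  defines "s \<equiv> (norm x)^2"
  shows "(\<Sum>i\<in>UNIV. \<Sum>j\<in>UNIV. radial_metric g h x i j * v$i * v$j) = g s * (norm v)^2 - h s * (x \<bullet> v)^2"
proof -
  have row: "(\<Sum>j\<in>UNIV. radial_metric g h x i j * v$i * v$j)
      = g s * (v$i * v$i) - (h s * (x \<bullet> v)) * (x$i * v$i)" for i
  proof -
    have "(\<Sum>j\<in>UNIV. radial_metric g h x i j * v$i * v$j)
        = (\<Sum>j\<in>UNIV. kronecker i j * (g s * v$i * v$j) - (h s * x$i * v$i) * (x$j * v$j))"
      by (simp add: radial_metric_def s_def algebra_simps)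
    also have "\<dots> = g s * v$i * v$i - (h s * x$i * v$i) * (x \<bullet> v)"
      by (simp add: sum_subtractf sum_distrib_left[symmetric] inner_vec_def)
    finally show ?thesis by (simp add: algebra_simps)
  qed
  show ?thesis
    by (simp add: row sum_subtractf sum_distrib_left[symmetric] sum_component_sq inner_vec_def power2_eq_square)
qed

lemma riemannian_metric_on_radial:
  fixes U :: "(real^'n) set"
  assumes "\<forall>x\<in>U. g ((norm x)^2) > 0 \<and> h ((norm x)^2) * (norm x)^2 < g ((norm x)^2)"
  shows "riemannian_metric_on U (radial_metric g h)"
  unfolding riemannian_metric_on_def
proof (intro ballI allI impI conjI)
  fix x i j assume "x \<in> U"
  show "radial_metric g h x i j = radial_metric g h x j i"
    by (simp add: radial_metric_def kronecker_def mult_ac)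
next
  fix x v :: "real^'n" assume "x \<in> U" and "v \<noteq> 0"
  define s where "s = (norm x)^2"
  have g_pos: "g s > 0" and bound: "h s * s < g s" using \<open>x \<in> U\<close> assms by (auto simp: s_def)
  have v_pos: "(norm v)^2 > 0" using \<open>v \<noteq> 0\<close> by simp
  have cauchy_schwarz: "(x \<bullet> v)^2 \<le> s * (norm v)^2"
    unfolding s_def power_mult_distrib[symmetric] abs_le_square_iff[symmetric]
    by (simp add: Cauchy_Schwarz_ineq2)
  have "h s * (x \<bullet> v)^2 < g s * (norm v)^2"
  proof (cases "h s \<le> 0")
    case True
    then show ?thesis using g_pos v_pos by (smt (verit) mult_nonpos_nonneg zero_le_power2 mult_pos_pos)
  next
    case False
    then have "h s * (x \<bullet> v)^2 \<le> (h s * s) * (norm v)^2"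
      using cauchy_schwarz by (simp add: mult_left_mono mult.assoc)
    also have "\<dots> < g s * (norm v)^2" using bound v_pos by simp
    finally show ?thesis .
  qed
  then show "(\<Sum>i\<in>UNIV. \<Sum>j\<in>UNIV. radial_metric g h x i j * v$i * v$j) > 0"
    by (simp add: radial_metric_quadratic_form s_def)
qed

lemma cov_deriv_radial_exp:
  fixes x :: "real^'n"
  defines "s \<equiv> (norm x)^2"
  assumes "(\<rho> has_real_derivative \<rho>') (at s)" and "(\<kappa> has_real_derivative \<kappa>') (at s)"
    and "\<kappa> s * s < 1"
  shows "cov_deriv (radial_metric (\<lambda>r. exp (2 * \<rho> r)) (\<lambda>r. exp (2 * \<rho> r) * \<kappa> r))
           (radial_form (\<lambda>r. C * sqrt (1 - \<kappa> r * r) * exp (2 * \<rho> r))) i j x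
       = C * (1 + 2 * \<rho>' * s) / sqrt (1 - \<kappa> s * s)
         * radial_metric (\<lambda>r. exp (2 * \<rho> r)) (\<lambda>r. exp (2 * \<rho> r) * \<kappa> r) x i j"
proof -
  define g where "g = (\<lambda>r. exp (2 * \<rho> r))"
  define h where "h = (\<lambda>r. exp (2 * \<rho> r) * \<kappa> r)"
  define f where "f = (\<lambda>r. C * sqrt (1 - \<kappa> r * r) * exp (2 * \<rho> r))"
  define e where "e = exp (2 * \<rho> s)"
  define q where "q = sqrt (1 - \<kappa> s * s)"
  define c where "c = C * (1 + 2 * \<rho>' * s) / q"
  define g' where "g' = 2 * \<rho>' * e"
  define h' where "h' = 2 * \<rho>' * e * \<kappa> s + e * \<kappa>'"
  define f' where "f' = C * (- (\<kappa>' * s + \<kappa> s) / (2 * q) * e + q * g')"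
  have q_pos: "q > 0" and q_sq: "q^2 = 1 - \<kappa> s * s"
    using assms(4) by (simp_all add: q_def)
  have e_pos: "e > 0" unfolding e_def by simp
  have dg: "(g has_real_derivative g') (at s)"
    unfolding g_def g'_def e_def by (auto intro!: derivative_eq_intros assms(2))
  have dh: "(h has_real_derivative h') (at s)"
    unfolding h_def h'_def e_def by (auto intro!: derivative_eq_intros assms(2,3))
  have dq: "((\<lambda>r. sqrt (1 - \<kappa> r * r)) has_real_derivative - (\<kappa>' * s + \<kappa> s) / (2 * q)) (at s)"
    using assms(4) unfolding q_def by (auto intro!: derivative_eq_intros assms(3) simp: divide_simps)
  have df: "(f has_real_derivative f') (at s)"
    using DERIV_cmult[OF DERIV_mult[OF dq dg[unfolded g_def]], of C]
    by (simp add: f_def f'_def q_def g'_def e_def mult_ac)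
  have at_s: "g s = e" "h s = e * \<kappa> s" "f s = C * q * e"
    by (simp_all add: g_def h_def f_def e_def q_def)
  have denom: "g s - h s * s = e * q^2"
    by (simp add: at_s q_sq algebra_simps)
  have ratio: "f s / (g s - h s * s) = C / q"
    unfolding denom using e_pos q_pos by (simp add: at_s power2_eq_square)
  have xx_coeff: "2 * f' - C / q * (2 * g' - h' * s) = - c * h s"
    unfolding at_s f'_def g'_def h'_def c_def using q_pos
    by (simp add: field_simps) (use q_sq in algebra)
  have delta_coeff: "f s + C / q * (g' + h s) * s = c * g s"
    unfolding at_s g'_def c_def using q_pos
    by (simp add: field_simps) (use q_sq in algebra)
  have nondegenerate: "g s \<noteq> 0" "g s - h s * s \<noteq> 0"
    unfolding denom using e_pos q_pos by (simp_all add: at_s)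
  have "cov_deriv (radial_metric g h) (radial_form f) i j x
      = (2 * f' - f s / (g s - h s * s) * (2 * g' - h' * s)) * x$i * x$j
        + (f s + f s / (g s - h s * s) * (g' + h s) * s) * kronecker i j"
    using cov_deriv_radial[of f f' x g g' h h' i j] df dg dh nondegenerate unfolding s_def by blast
  also have "\<dots> = c * radial_metric g h x i j"
    unfolding ratio xx_coeff delta_coeff by (simp add: radial_metric_def s_def algebra_simps)
  finally show ?thesis unfolding g_def h_def f_def c_def q_def .
qed

theorem corollary5p3:
  fixes U :: "(real^'n) set" and T :: "real set"
    and \<kappa> \<rho> :: "real \<Rightarrow> real" and C :: real
    and a :: "real^'n \<Rightarrow> 'n \<Rightarrow> 'n \<Rightarrow> real" and b :: "real^'n \<Rightarrow> 'n \<Rightarrow> real"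
  assumes "open U" and "connected U"
    and "open T" and "\<forall>x\<in>U. (norm x)^2 \<in> T"
    and "smooth_on T \<kappa>" and "smooth_on T \<rho>"
    and "\<forall>x\<in>U. 1 - \<kappa> ((norm x)^2) * (norm x)^2 > 0"
    and "C \<noteq> 0"
    and "a = (\<lambda>x i j. exp (2 * \<rho> ((norm x)^2)) *
              ((if i = j then 1 else 0) - \<kappa> ((norm x)^2) * x$i * x$j))"
    and "b = (\<lambda>x i. C * sqrt (1 - \<kappa> ((norm x)^2) * (norm x)^2) * exp (2 * \<rho> ((norm x)^2)) * x$i)"
  shows "riemannian_metric_on U a \<and> closed_conformal U a b \<and>
         (\<forall>x\<in>U. form_norm_sq a b x = C^2 * exp (2 * \<rho> ((norm x)^2)) * (norm x)^2)"
proof -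
  have a_radial: "a = radial_metric (\<lambda>r. exp (2 * \<rho> r)) (\<lambda>r. exp (2 * \<rho> r) * \<kappa> r)"
    unfolding assms(9) by (intro ext) (simp add: radial_metric_def kronecker_def algebra_simps)
  have b_radial: "b = radial_form (\<lambda>r. C * sqrt (1 - \<kappa> r * r) * exp (2 * \<rho> r))"
    unfolding assms(10) by (intro ext) (simp add: radial_form_def)
  have "riemannian_metric_on U a"
    unfolding a_radial using assms(7) by (intro riemannian_metric_on_radial) auto
  moreover have "closed_conformal U a b"
    unfolding closed_conformal_def a_radial b_radial
    using assms(4-7) by (auto intro!: exI cov_deriv_radial_exp smooth_on_has_real_derivative)
  moreover have "form_norm_sq a b x = C^2 * exp (2 * \<rho> ((norm x)^2)) * (norm x)^2" if "x \<in> U" for x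
  proof -
    define s where "s = (norm x)^2"
    have kappa_bound: "\<kappa> s * s < 1" using assms(7) \<open>x \<in> U\<close> by (simp add: s_def)
    have "form_norm_sq a b x = (C * sqrt (1 - \<kappa> s * s) * exp (2 * \<rho> s))^2 * s
        / (exp (2 * \<rho> s) - exp (2 * \<rho> s) * \<kappa> s * s)"
      unfolding a_radial b_radial using kappa_bound
      by (subst form_norm_sq_radial) (auto simp: s_def algebra_simps)
    also have "\<dots> = C^2 * (1 - \<kappa> s * s) * (exp (2 * \<rho> s))^2 * s
        / (exp (2 * \<rho> s) * (1 - \<kappa> s * s))"
      using kappa_bound by (simp add: power_mult_distrib algebra_simps)
    also have "\<dots> = C^2 * exp (2 * \<rho> s) * s"
      using kappa_bound by (simp add: power2_eq_square)
    finally show ?thesis unfolding s_def .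
  qed
  ultimately show ?thesis by blast
qed

end
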